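(* Let $(A,C,k)$ be an instance with $n$ voters, let $t>0$, and let $W$ be an affordable committee with $|N_c|\le t\frac{n}{k}$ for every $c\in C\setminus W$. Then the utilitarian ratio of $W$ is at least $\min\left(\frac12,\frac{|W|}{2tk}\right)$.
   Context: An instance $(A,C,k)$ consists of a finite nonempty candidate set $C$, voters $N=\{1,\dots,n\}$, approval sets $A_i\subseteq C$, and a committee size $1\le k\le |C|$. $N_c=\{i\in N: c\in A_i\}$. A committee is a set $W\subseteq C$ with $|W|\le k$. $\mathrm{sw}(W)=\sum_{i\in N}|A_i\cap W|$; the utilitarian ratio of $W$ is $\mathrm{sw}(W)/\max\{\mathrm{sw}(W'): |W'|=k\}$. A committee $W$ is affordable if there are functions $p_i:C\to\mathbb{R}_{\ge0}$ ($i\in N$) with: $p_i(c)=0$ whenever $c\notin A_i$; $\sum_{c}p_i(c)\le k/n$ for all $i$; $\sum_i p_i(c)=1$ for all $c\in W$; $\sum_i p_i(c)=0$ for all $c\notin W$. *)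

theory Defs
  imports Main "HOL-Library.Multiset" Complex_Main
begin

definition is_instance :: "'c set \<Rightarrow> nat \<Rightarrow> (nat \<Rightarrow> 'c set) \<Rightarrow> nat \<Rightarrow> bool" where
  "is_instance C n A k \<longleftrightarrow> finite C \<and> C \<noteq> {} \<and> n \<ge> 1 \<and>
     (\<forall>i\<in>{1..n}. A i \<subseteq> C) \<and> 1 \<le> k \<and> k \<le> card C"

definition is_committee :: "'c set \<Rightarrow> nat \<Rightarrow> 'c set \<Rightarrow> bool" where
  "is_committee C k W \<longleftrightarrow> W \<subseteq> C \<and> card W \<le> k"

definition supporters :: "nat \<Rightarrow> (nat \<Rightarrow> 'c set) \<Rightarrow> 'c \<Rightarrow> nat set" where
  "supporters n A c = {i\<in>{1..n}. c \<in> A i}"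

definition sw :: "nat \<Rightarrow> (nat \<Rightarrow> 'c set) \<Rightarrow> 'c set \<Rightarrow> nat" where
  "sw n A W = (\<Sum>i\<in>{1..n}. card (A i \<inter> W))"

definition max_sw :: "'c set \<Rightarrow> nat \<Rightarrow> (nat \<Rightarrow> 'c set) \<Rightarrow> nat \<Rightarrow> nat" where
  "max_sw C n A k = Max {sw n A W' | W'. W' \<subseteq> C \<and> card W' = k}"

definition util_ratio :: "'c set \<Rightarrow> nat \<Rightarrow> (nat \<Rightarrow> 'c set) \<Rightarrow> nat \<Rightarrow> 'c set \<Rightarrow> real" where
  "util_ratio C n A k W = real (sw n A W) / real (max_sw C n A k)"

definition affordable :: "'c set \<Rightarrow> nat \<Rightarrow> (nat \<Rightarrow> 'c set) \<Rightarrow> nat \<Rightarrow> 'c set \<Rightarrow> bool" where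
  "affordable C n A k W \<longleftrightarrow> (\<exists>p :: nat \<Rightarrow> 'c \<Rightarrow> real.
     (\<forall>i\<in>{1..n}. \<forall>c\<in>C. p i c \<ge> 0) \<and>
     (\<forall>i\<in>{1..n}. \<forall>c\<in>C. c \<notin> A i \<longrightarrow> p i c = 0) \<and>
     (\<forall>i\<in>{1..n}. (\<Sum>c\<in>C. p i c) \<le> real k / real n) \<and>
     (\<forall>c\<in>W. (\<Sum>i\<in>{1..n}. p i c) = 1) \<and>
     (\<forall>c\<in>C - W. (\<Sum>i\<in>{1..n}. p i c) = 0))"

end

theory Submission
  imports Defs
begin

text \<open>Since every voter spends at most \<open>k/n\<close> and each member of \<open>W\<close> costs \<open>1\<close>, each
  member has at least \<open>n/k\<close> supporters, so \<open>sw(W) \<ge> |W| n/k\<close>. An optimal committee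
  gains at most \<open>k \<cdot> t n/k = t n\<close> over \<open>W\<close> through its non-members, so the ratio is at least
  \<open>sw(W)/(sw(W) + t n) \<ge> |W|/(|W| + t k) \<ge> min(1/2, |W|/(2 t k))\<close>.\<close>

lemma sw_eq_sum_card_supporters:
  assumes "finite W"
  shows "sw n A W = (\<Sum>c\<in>W. card (supporters n A c))"
proof -
  have "sw n A W = (\<Sum>i\<in>{1..n}. \<Sum>c\<in>W. if c \<in> A i then 1 else 0)"
    unfolding sw_def using assms by (intro sum.cong refl) (simp add: sum.If_cases Int_commute Int_def)
  also have "\<dots> = (\<Sum>c\<in>W. \<Sum>i\<in>{1..n}. if c \<in> A i then 1 else 0)"
    by (rule sum.swap)
  also have "\<dots> = (\<Sum>c\<in>W. card (supporters n A c))"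
    unfolding supporters_def by (intro sum.cong refl) (simp add: sum.If_cases Int_def)
  finally show ?thesis .
qed

lemma sw_mono:
  assumes "W \<subseteq> W'" and "finite W'"
  shows "sw n A W \<le> sw n A W'"
  unfolding sw_def using assms by (intro sum_mono card_mono) auto

lemma card_supporters_ge_if_affordable:
  assumes "affordable C n A k W" and "finite C" and "c \<in> W" and "c \<in> C"
  shows "real n / real k \<le> real (card (supporters n A c))"
proof -
  obtain p :: "nat \<Rightarrow> 'a \<Rightarrow> real" where
    nonneg: "\<forall>i\<in>{1..n}. \<forall>c\<in>C. p i c \<ge> 0" and
    approved: "\<forall>i\<in>{1..n}. \<forall>c\<in>C. c \<notin> A i \<longrightarrow> p i c = 0" and
    budget: "\<forall>i\<in>{1..n}. (\<Sum>c\<in>C. p i c) \<le> real k / real n" and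
    paid: "\<forall>c\<in>W. (\<Sum>i\<in>{1..n}. p i c) = 1"
    using assms(1) unfolding affordable_def by blast
  have "1 = (\<Sum>i\<in>{1..n}. p i c)"
    using paid assms(3) by simp
  also have "\<dots> = (\<Sum>i\<in>supporters n A c. p i c)"
    unfolding supporters_def by (rule sum.mono_neutral_right) (use approved assms(4) in auto)
  also have "\<dots> \<le> (\<Sum>i\<in>supporters n A c. real k / real n)"
  proof (rule sum_mono)
    fix i assume "i \<in> supporters n A c"
    then have i: "i \<in> {1..n}" by (simp add: supporters_def)
    have "p i c \<le> (\<Sum>c\<in>C. p i c)"
      by (rule member_le_sum) (use nonneg i assms(2,4) in auto)
    then show "p i c \<le> real k / real n" using budget i by force
  qed
  finally have "1 \<le> real (card (supporters n A c)) * real k / real n"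
    by simp
  moreover have "n > 0"
    using \<open>1 = (\<Sum>i\<in>{1..n}. p i c)\<close> by (cases n) auto
  ultimately show ?thesis
    by (cases "k = 0") (simp_all add: field_simps)
qed

lemma sw_ge_if_affordable:
  assumes "affordable C n A k W" and "finite C" and "W \<subseteq> C"
  shows "real (card W) * (real n / real k) \<le> real (sw n A W)"
proof -
  have "finite W" using assms(2,3) finite_subset by blast
  have "real (card W) * (real n / real k) = (\<Sum>c\<in>W. real n / real k)"
    by simp
  also have "\<dots> \<le> (\<Sum>c\<in>W. real (card (supporters n A c)))"
    using card_supporters_ge_if_affordable[OF assms(1,2)] assms(3) by (intro sum_mono) auto
  also have "\<dots> = real (sw n A W)"
    using sw_eq_sum_card_supporters[OF \<open>finite W\<close>] by simp
  finally show ?thesis .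
qed

lemma finite_sw_committees:
  assumes "finite C"
  shows "finite {sw n A W | W. W \<subseteq> C \<and> card W = k}"
proof -
  have "{sw n A W | W. W \<subseteq> C \<and> card W = k} \<subseteq> sw n A ` Pow C" by auto
  then show ?thesis using assms finite_subset by blast
qed

lemma max_sw_attained:
  assumes "finite C" and "k \<le> card C"
  obtains W where "W \<subseteq> C" and "card W = k" and "max_sw C n A k = sw n A W"
proof -
  obtain W where "W \<subseteq> C" "card W = k"
    using assms(2) obtain_subset_with_card_n by metis
  then have "{sw n A W | W. W \<subseteq> C \<and> card W = k} \<noteq> {}" by blast
  from Max_in[OF finite_sw_committees[OF assms(1)] this] show ?thesis
    using that unfolding max_sw_def by auto
qed

lemma sw_le_max_sw:
  assumes "finite C" and "W \<subseteq> C" and "card W \<le> k" and "k \<le> card C"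
  shows "sw n A W \<le> max_sw C n A k"
proof -
  have "finite W" using assms(1,2) finite_subset by blast
  have "k - card W \<le> card (C - W)"
    using assms \<open>finite W\<close> by (simp add: card_Diff_subset)
  then obtain B where B: "B \<subseteq> C - W" "card B = k - card W"
    using obtain_subset_with_card_n by metis
  have "finite B" using B assms(1) finite_subset by blast
  have "card (W \<union> B) = k"
    using card_Un_disjoint[OF \<open>finite W\<close> \<open>finite B\<close>] B assms(3) by auto
  then have "sw n A (W \<union> B) \<le> max_sw C n A k"
    unfolding max_sw_def using B assms(2)
    by (intro Max_ge[OF finite_sw_committees[OF assms(1)]]) auto
  moreover have "sw n A W \<le> sw n A (W \<union> B)"
    using \<open>finite W\<close> \<open>finite B\<close> by (intro sw_mono) auto
  ultimately show ?thesis by linarith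
qed

lemma max_sw_le_sw_add:
  assumes "finite C" and "k \<le> card C" and "W \<subseteq> C" and "b \<ge> 0"
    and few_supporters: "\<forall>c\<in>C - W. real (card (supporters n A c)) \<le> b"
  shows "real (max_sw C n A k) \<le> real (sw n A W) + real k * b"
proof -
  obtain W' where W': "W' \<subseteq> C" "card W' = k" "max_sw C n A k = sw n A W'"
    using max_sw_attained[OF assms(1,2)] .
  have "finite W'" "finite W" using W'(1) assms(1,3) finite_subset by blast+
  let ?s = "\<lambda>c. real (card (supporters n A c))"
  have "real (max_sw C n A k) = (\<Sum>c\<in>W' \<inter> W. ?s c) + (\<Sum>c\<in>W' - W. ?s c)"
    using W'(3) sw_eq_sum_card_supporters[OF \<open>finite W'\<close>] sum.Int_Diff[OF \<open>finite W'\<close>]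
    by simp
  also have "(\<Sum>c\<in>W' \<inter> W. ?s c) \<le> (\<Sum>c\<in>W. ?s c)"
    using \<open>finite W\<close> by (intro sum_mono2) auto
  also have "(\<Sum>c\<in>W' - W. ?s c) \<le> (\<Sum>c\<in>W' - W. b)"
    using few_supporters W'(1) by (intro sum_mono) auto
  also have "\<dots> \<le> real k * b"
    using card_mono[OF \<open>finite W'\<close>, of "W' - W"] W'(2) assms(4)
    by (simp add: mult_right_mono)
  finally show ?thesis
    using sw_eq_sum_card_supporters[OF \<open>finite W\<close>] by simp
qed

lemma divide_add_le_divide:
  fixes x s m a :: real
  assumes "0 < x" and "x \<le> s" and "s \<le> m" and "m \<le> s + a" and "0 \<le> a"
  shows "x / (x + a) \<le> s / m"
proof -
  have "x * a \<le> s * a"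
    using assms by (intro mult_right_mono)
  then have "x / (x + a) \<le> s / (s + a)"
    using assms by (simp add: divide_simps algebra_simps)
  also have "\<dots> \<le> s / m"
    using assms by (intro divide_left_mono) auto
  finally show ?thesis .
qed

lemma min_half_le_divide_add:
  fixes w a :: real
  assumes "0 < w" and "0 < a"
  shows "min (1/2) (w / (2 * a)) \<le> w / (w + a)"
proof (cases "a \<le> w")
  case True
  then show ?thesis using assms by (intro min.coboundedI1) (simp add: field_simps)
next
  case False
  then show ?thesis using assms by (intro min.coboundedI2 divide_left_mono) auto
qed

lemma min_half_le_ratio:
  fixes w s m t :: real and n k :: nat
  assumes "0 < w" and "0 < t" and "0 < n" and "0 < k"
    and "w * (real n / real k) \<le> s" and "s \<le> m" and "m \<le> s + t * real n"
  shows "min (1/2) (w / (2 * t * real k)) \<le> s / m"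
proof -
  define x where "x = w * (real n / real k)"
  have "x / (x + t * real n) = (real n / real k * w) / (real n / real k * (w + t * real k))"
    using assms(4) unfolding x_def by (simp add: algebra_simps)
  also have "\<dots> = w / (w + t * real k)"
    using assms(3,4) by simp
  finally have "x / (x + t * real n) = w / (w + t * real k)" .
  moreover have "x / (x + t * real n) \<le> s / m"
    using assms unfolding x_def by (intro divide_add_le_divide) auto
  moreover have "min (1/2) (w / (2 * (t * real k))) \<le> w / (w + t * real k)"
    using assms(1,2,4) by (intro min_half_le_divide_add) auto
  ultimately show ?thesis by (simp add: mult.assoc)
qed

theorem lemma2:
  fixes C :: "'c set" and n k :: nat and A :: "nat \<Rightarrow> 'c set" and W :: "'c set" and t :: real
  assumes "is_instance C n A k"
    and "is_committee C k W"
    and "t > 0"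
    and "affordable C n A k W"
    and "\<forall>c\<in>C - W. real (card (supporters n A c)) \<le> t * real n / real k"
  shows "util_ratio C n A k W \<ge> min (1/2) (real (card W) / (2 * t * real k))"
proof (cases "W = {}")
  case True
  then show ?thesis by (simp add: util_ratio_def)
next
  case False
  have inst: "finite C" "n \<ge> 1" "1 \<le> k" "k \<le> card C" and W: "W \<subseteq> C" "card W \<le> k"
    using assms(1,2) by (auto simp: is_instance_def is_committee_def)
  have "real (card W) > 0" using False W(1) inst(1) finite_subset by fastforce
  moreover have "real (card W) * (real n / real k) \<le> real (sw n A W)"
    using sw_ge_if_affordable[OF assms(4) inst(1) W(1)] .
  moreover have "real (sw n A W) \<le> real (max_sw C n A k)"
    using sw_le_max_sw[OF inst(1) W inst(4)] by simp
  moreover have "real (max_sw C n A k) \<le> real (sw n A W) + t * real n"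
    using max_sw_le_sw_add[OF inst(1,4) W(1) _ assms(5)] assms(3) inst(3) by simp
  ultimately show ?thesis
    unfolding util_ratio_def using assms(3) inst(2,3) by (intro min_half_le_ratio) auto
qed

end
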